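(* In the insurance game built on any stag hunt, the profile $A^n$ is the unique weakly maximal state and the unique strongly maximal state; in particular the insurance game is weakly acyclic.
   Context: A stag hunt has players $I=\{1,\dots,n\}$ with strategies $\{A,D\}$, a constant $c\in\mathbb{R}$ and, for each $i$, a function $f_i$ on subsets $T\subseteq I$ with $i\in T$, strictly increasing with respect to inclusion, with $f_i(I)>c$ and $f_i(\{i\})<c$; an adopter gets $f_i(T)$ where $T$ is the set of adopters, and a defector gets $c$. The insurance game built on it has players $I$, each with strategies $\{A,D,X\}$. For a profile $s$ let $T(s)=\{j: s_j\in\{A,X\}\}$. Each player $i$ has premium $\pi_i>0$ and reimbursement $R_i$; payoffs are $u_i(s)=c$ if $s_i=D$; $f_i(T(s))$ if $s_i=A$; $f_i(T(s))-\pi_i+R_i\cdot\mathbf{1}[T(s)\neq I]$ if $s_i=X$; with $\pi_i<f_i(I)-c$ and $f_i(T)-\pi_i+R_i>c$ for all $T$ with $i\in T\neq I$. For a profile $s$, $(s_i',s_{-i})$ is $s$ with player $i$'s strategy replaced by $s_i'$. A pure Nash equilibrium is $s$ with $u_i(s)\ge u_i(s_i',s_{-i})$ for all $i,s_i'$. The strict deployment graph has vertex set the profiles and an arc $(s,s')$ iff $s'=(s_i',s_{-i})$ for some $i$ with $u_i(s')>u_i(s)$; the ordinal deployment graph has an arc $(s,s')$, $s'\neq s$, iff $s'=(s_i',s_{-i})$ for some $i$ with $u_i(s')\ge u_i(s)$. For either graph define $s\succeq s'$ iff there is a directed path (possibly of length $0$) from $s'$ to $s$, and $s\succ s'$ iff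 $s\succeq s'$ and not $s'\succeq s$; $s^*$ is maximal if no $s$ satisfies $s\succ s^*$. Weakly (resp. strongly) maximal states are maximal states for the strict (resp. ordinal) deployment graph. A game is weakly acyclic if all its weakly maximal states are pure Nash equilibria. *)

theory Defs
  imports Complex_Main
begin

text \<open>Players form a finite type 'i (the player set I is UNIV). Profiles are
functions from players to strategies; every player may use every strategy of the
strategy type.\<close>

datatype strat = A | D | X

text \<open>Stag hunt: f i T is the adopter payoff of player i when T is the adopter set
(only meaningful for i in T).\<close>
definition stag_hunt :: "real \<Rightarrow> ('i::finite \<Rightarrow> 'i set \<Rightarrow> real) \<Rightarrow> bool" where
  "stag_hunt c f \<longleftrightarrow>
     (\<forall>i T T'. i \<in> T \<longrightarrow> T \<subset> T' \<longrightarrow> f i T < f i T') \<and>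
     (\<forall>i. f i UNIV > c) \<and> (\<forall>i. f i {i} < c)"

definition adopters :: "('i \<Rightarrow> strat) \<Rightarrow> 'i set" where
  "adopters s = {j. s j = A \<or> s j = X}"

definition ins_payoff ::
  "real \<Rightarrow> ('i::finite \<Rightarrow> 'i set \<Rightarrow> real) \<Rightarrow> ('i \<Rightarrow> real) \<Rightarrow> ('i \<Rightarrow> real)
     \<Rightarrow> ('i \<Rightarrow> strat) \<Rightarrow> 'i \<Rightarrow> real" where
  "ins_payoff c f \<pi> R s i =
     (case s i of
        D \<Rightarrow> c
      | A \<Rightarrow> f i (adopters s)
      | X \<Rightarrow> f i (adopters s) - \<pi> i + (if adopters s \<noteq> UNIV then R i else 0))"

definition insurance_params ::
  "real \<Rightarrow> ('i::finite \<Rightarrow> 'i set \<Rightarrow> real) \<Rightarrow> ('i \<Rightarrow> real) \<Rightarrow> ('i \<Rightarrow> real) \<Rightarrow> bool" where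
  "insurance_params c f \<pi> R \<longleftrightarrow>
     (\<forall>i. \<pi> i > 0) \<and> (\<forall>i. \<pi> i < f i UNIV - c) \<and>
     (\<forall>i T. i \<in> T \<longrightarrow> T \<noteq> UNIV \<longrightarrow> f i T - \<pi> i + R i > c)"

definition pure_nash :: "(('i \<Rightarrow> 's) \<Rightarrow> 'i \<Rightarrow> real) \<Rightarrow> ('i \<Rightarrow> 's) \<Rightarrow> bool" where
  "pure_nash u s \<longleftrightarrow> (\<forall>i a. u s i \<ge> u (s(i := a)) i)"

definition strict_arc :: "(('i \<Rightarrow> 's) \<Rightarrow> 'i \<Rightarrow> real) \<Rightarrow> ('i \<Rightarrow> 's) \<Rightarrow> ('i \<Rightarrow> 's) \<Rightarrow> bool" where
  "strict_arc u s s' \<longleftrightarrow> (\<exists>i a. s' = s(i := a) \<and> u s' i > u s i)"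

definition ordinal_arc :: "(('i \<Rightarrow> 's) \<Rightarrow> 'i \<Rightarrow> real) \<Rightarrow> ('i \<Rightarrow> 's) \<Rightarrow> ('i \<Rightarrow> 's) \<Rightarrow> bool" where
  "ordinal_arc u s s' \<longleftrightarrow> s' \<noteq> s \<and> (\<exists>i a. s' = s(i := a) \<and> u s' i \<ge> u s i)"

definition geq_in :: "('p \<Rightarrow> 'p \<Rightarrow> bool) \<Rightarrow> 'p \<Rightarrow> 'p \<Rightarrow> bool" where
  "geq_in E s s' \<longleftrightarrow> E\<^sup>*\<^sup>* s' s"

definition gt_in :: "('p \<Rightarrow> 'p \<Rightarrow> bool) \<Rightarrow> 'p \<Rightarrow> 'p \<Rightarrow> bool" where
  "gt_in E s s' \<longleftrightarrow> geq_in E s s' \<and> \<not> geq_in E s' s"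

definition maximal_in :: "('p \<Rightarrow> 'p \<Rightarrow> bool) \<Rightarrow> 'p \<Rightarrow> bool" where
  "maximal_in E s0 \<longleftrightarrow> \<not> (\<exists>s. gt_in E s s0)"

definition weakly_maximal :: "(('i \<Rightarrow> 's) \<Rightarrow> 'i \<Rightarrow> real) \<Rightarrow> ('i \<Rightarrow> 's) \<Rightarrow> bool" where
  "weakly_maximal u s \<longleftrightarrow> maximal_in (strict_arc u) s"

definition strongly_maximal :: "(('i \<Rightarrow> 's) \<Rightarrow> 'i \<Rightarrow> real) \<Rightarrow> ('i \<Rightarrow> 's) \<Rightarrow> bool" where
  "strongly_maximal u s \<longleftrightarrow> maximal_in (ordinal_arc u) s"

definition weakly_acyclic :: "(('i \<Rightarrow> 's) \<Rightarrow> 'i \<Rightarrow> real) \<Rightarrow> bool" where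
  "weakly_acyclic u \<longleftrightarrow> (\<forall>s. weakly_maximal u s \<longrightarrow> pure_nash u s)"

end

theory Submission
  imports Defs
begin

text \<open>Every profile other than \<open>A\<^sup>n\<close> has a strictly improving deviation: a defector
gains by insuring (insurance pays more than \<open>c\<close> unless everybody adopts, and then the
premium is below \<open>f i I - c\<close>), and once nobody defects an insured player gains the
premium by dropping the insurance. Each such move lowers \<open>2\<cdot>#D + #X\<close>, so \<open>A\<^sup>n\<close> is
reachable from every profile. On the other hand \<open>A\<^sup>n\<close> is a strict Nash equilibrium,
hence a sink of both deployment graphs, and a sink reachable from everywhere is the
unique maximal state.\<close>

definition strict_nash :: "(('i \<Rightarrow> 's) \<Rightarrow> 'i \<Rightarrow> real) \<Rightarrow> ('i \<Rightarrow> 's) \<Rightarrow> bool" where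
  "strict_nash u s \<longleftrightarrow> (\<forall>i a. a \<noteq> s i \<longrightarrow> u (s(i := a)) i < u s i)"

lemma pure_nash_if_strict_nash: "strict_nash u s \<Longrightarrow> pure_nash u s"
  unfolding strict_nash_def pure_nash_def
  by (metis fun_upd_triv order.refl order.strict_implies_order)

lemma strict_arc_imp_ordinal_arc: "strict_arc u s s' \<Longrightarrow> ordinal_arc u s s'"
  unfolding strict_arc_def ordinal_arc_def by force

lemma no_ordinal_arc_from_strict_nash:
  assumes "strict_nash u s"
  shows "\<not> ordinal_arc u s s'"
  using assms unfolding strict_nash_def ordinal_arc_def
  by (metis fun_upd_triv not_less)

lemma no_strict_arc_from_strict_nash: "strict_nash u s \<Longrightarrow> \<not> strict_arc u s s'"
  using no_ordinal_arc_from_strict_nash strict_arc_imp_ordinal_arc by blast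

lemma Collect_maximal_in_eq_sink:
  assumes sink: "\<And>s'. \<not> E a s'" and reach: "\<And>s. E\<^sup>*\<^sup>* s a"
  shows "{s. maximal_in E s} = {a}"
proof -
  have "s = a" if "E\<^sup>*\<^sup>* a s" for s
    using that sink by (metis converse_rtranclpE)
  then have "maximal_in E s \<longleftrightarrow> s = a" for s
    unfolding maximal_in_def gt_in_def geq_in_def using reach by blast
  then show ?thesis by auto
qed

lemma rtranclp_to_target_by_descent:
  fixes m :: "'a \<Rightarrow> nat"
  assumes "\<And>s. s \<noteq> a \<Longrightarrow> \<exists>s'. E s s' \<and> m s' < m s"
  shows "E\<^sup>*\<^sup>* s a"
proof (induction s rule: measure_induct_rule[of m])
  case (less s)
  show ?case
  proof (cases "s = a")
    case False
    with assms obtain s' where "E s s'" "m s' < m s" by blast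
    with less show ?thesis by (meson converse_rtranclp_into_rtranclp)
  qed simp
qed

lemma mem_adopters_iff: "j \<in> adopters s \<longleftrightarrow> s j \<noteq> D"
  unfolding adopters_def by (cases "s j") simp_all

lemma adopters_eq_UNIV_iff: "adopters s = UNIV \<longleftrightarrow> (\<forall>j. s j \<noteq> D)"
  by (simp add: set_eq_iff mem_adopters_iff)

lemma insuring_beats_defecting:
  assumes "insurance_params c f \<pi> R" and "s i = D"
  shows "ins_payoff c f \<pi> R s i < ins_payoff c f \<pi> R (s(i := X)) i"
proof -
  let ?T = "adopters (s(i := X))"
  have "i \<in> ?T" by (simp add: mem_adopters_iff)
  have "c < f i ?T - \<pi> i + (if ?T \<noteq> UNIV then R i else 0)"
  proof (cases "?T = UNIV")
    case True
    moreover have "\<pi> i < f i UNIV - c"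
      using assms(1) unfolding insurance_params_def by blast
    ultimately show ?thesis by simp
  next
    case False
    with assms(1) \<open>i \<in> ?T\<close> show ?thesis unfolding insurance_params_def by simp
  qed
  with assms(2) show ?thesis by (simp add: ins_payoff_def)
qed

lemma adopting_beats_insuring_without_defectors:
  assumes "insurance_params c f \<pi> R" and "\<forall>j. s j \<noteq> D" and "s i = X"
  shows "ins_payoff c f \<pi> R s i < ins_payoff c f \<pi> R (s(i := A)) i"
proof -
  have "adopters s = UNIV" "adopters (s(i := A)) = UNIV"
    using assms(2) by (simp_all add: adopters_eq_UNIV_iff)
  with assms show ?thesis by (simp add: ins_payoff_def insurance_params_def)
qed

lemma all_adopt_strict_nash:
  fixes f :: "'i::finite \<Rightarrow> 'i set \<Rightarrow> real"
  assumes "stag_hunt c f" and "insurance_params c f \<pi> R"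
  shows "strict_nash (ins_payoff c f \<pi> R) (\<lambda>_. A)"
  unfolding strict_nash_def
proof (intro allI impI)
  fix i :: 'i and a :: strat
  assume "a \<noteq> (\<lambda>_. A) i"
  then consider "a = D" | "a = X" by (cases a) auto
  moreover have all: "adopters (\<lambda>_. A) = UNIV" and ins: "adopters ((\<lambda>_. A)(i := X)) = UNIV"
    by (simp_all add: adopters_eq_UNIV_iff)
  moreover have "f i UNIV > c" "\<pi> i > 0"
    using assms unfolding stag_hunt_def insurance_params_def by auto
  ultimately show "ins_payoff c f \<pi> R ((\<lambda>_. A)(i := a)) i < ins_payoff c f \<pi> R (\<lambda>_. A) i"
    by cases (simp_all add: ins_payoff_def all ins)
qed

definition defection_potential :: "('i::finite \<Rightarrow> strat) \<Rightarrow> nat" where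
  "defection_potential s = 2 * card {j. s j = D} + card {j. s j = X}"

lemma defection_potential_insure:
  assumes "s i = D"
  shows "defection_potential (s(i := X)) < defection_potential s"
proof -
  have D_eq: "{j. (s(i := X)) j = D} = {j. s j = D} - {i}"
    and X_eq: "{j. (s(i := X)) j = X} = insert i {j. s j = X}"
    by auto
  have "card ({j. s j = D} - {i}) < card {j. s j = D}"
    using assms by (intro card_Diff1_less) auto
  moreover have "card (insert i {j. s j = X}) \<le> card {j. s j = X} + 1"
    by (simp add: card_insert_if)
  ultimately show ?thesis
    by (simp only: defection_potential_def D_eq X_eq)
qed

lemma defection_potential_adopt:
  assumes "s i = X"
  shows "defection_potential (s(i := A)) < defection_potential s"
proof -
  have D_eq: "{j. (s(i := A)) j = D} = {j. s j = D}"
    and X_eq: "{j. (s(i := A)) j = X} = {j. s j = X} - {i}"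
    using assms by auto
  have "card ({j. s j = X} - {i}) < card {j. s j = X}"
    using assms by (intro card_Diff1_less) auto
  then show ?thesis
    by (simp only: defection_potential_def D_eq X_eq)
qed

lemma improving_descent_to_all_adopt:
  assumes "insurance_params c f \<pi> R" and "s \<noteq> (\<lambda>_. A)"
  shows "\<exists>s'. strict_arc (ins_payoff c f \<pi> R) s s'
           \<and> defection_potential s' < defection_potential s"
proof (cases "\<exists>i. s i = D")
  case True
  then obtain i where i: "s i = D" ..
  have "strict_arc (ins_payoff c f \<pi> R) s (s(i := X))"
    unfolding strict_arc_def using insuring_beats_defecting[OF assms(1), of s i] i by blast
  with defection_potential_insure[of s i] i show ?thesis by blast
next
  case False
  from assms(2) obtain i where "s i \<noteq> A" by auto
  with False have i: "s i = X" by (cases "s i") auto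
  have "strict_arc (ins_payoff c f \<pi> R) s (s(i := A))"
    unfolding strict_arc_def
    using adopting_beats_insuring_without_defectors[OF assms(1), of s i] i False by blast
  with defection_potential_adopt[of s i] i show ?thesis by blast
qed

theorem theorem6:
  fixes c :: real and f :: "'i::finite \<Rightarrow> 'i set \<Rightarrow> real"
    and \<pi> R :: "'i \<Rightarrow> real"
  assumes "stag_hunt c f"
    and "insurance_params c f \<pi> R"
  shows "{s. weakly_maximal (ins_payoff c f \<pi> R) s} = {(\<lambda>_. A)}
     \<and> {s. strongly_maximal (ins_payoff c f \<pi> R) s} = {(\<lambda>_. A)}
     \<and> weakly_acyclic (ins_payoff c f \<pi> R)"
proof -
  let ?u = "ins_payoff c f \<pi> R"
  have nash: "strict_nash ?u (\<lambda>_. A)"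
    using all_adopt_strict_nash[OF assms] .
  have strict_reach: "(strict_arc ?u)\<^sup>*\<^sup>* s (\<lambda>_. A)" for s
    by (rule rtranclp_to_target_by_descent[where m = defection_potential])
       (rule improving_descent_to_all_adopt[OF assms(2)])
  have ordinal_reach: "(ordinal_arc ?u)\<^sup>*\<^sup>* s (\<lambda>_. A)" for s
    using strict_reach[of s] by (rule rtranclp_mono[THEN predicate2D, rotated])
       (auto intro: strict_arc_imp_ordinal_arc)
  have weak: "{s. weakly_maximal ?u s} = {(\<lambda>_. A)}"
    unfolding weakly_maximal_def
    using no_strict_arc_from_strict_nash[OF nash] strict_reach
    by (rule Collect_maximal_in_eq_sink)
  moreover have "{s. strongly_maximal ?u s} = {(\<lambda>_. A)}"
    unfolding strongly_maximal_def
    using no_ordinal_arc_from_strict_nash[OF nash] ordinal_reach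
    by (rule Collect_maximal_in_eq_sink)
  moreover have "weakly_acyclic ?u"
    unfolding weakly_acyclic_def using weak pure_nash_if_strict_nash[OF nash]
    by (metis mem_Collect_eq singletonD)
  ultimately show ?thesis by blast
qed

end
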